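(* Induced subposets of c.i.-posets are c.i.-posets: if $P$ is a c.i.-poset and $Q$ is a poset admitting an injective map $i:Q\to P$ with $i(q)\le_Pi(q')$ if and only if $q\le_Qq'$, then $Q$ is a c.i.-poset.
   Context: All posets are finite. For a finite poset $P$, a connected order ideal is a nonempty downward-closed subset whose induced Hasse diagram is connected; $\mathcal{J}_{\mathrm{conn}}(P)$ denotes the set of these; two connected order ideals intersect nontrivially if they are neither disjoint nor nested, and $\Pi(P)$ is the set of such unordered pairs. $P$ is a c.i.-poset if $|\mathcal{J}_{\mathrm{conn}}(P)|-|\Pi(P)|=|P|$; equivalently, for any field $k$, the presentation of the ring $R_P$ (the span in $k[x_p:p\in P]$ of the monomials $\prod_px_p^{f(p)}$ over $f:P\to\mathbb{N}$ with $f(p)\ge f(p')$ whenever $p<_Pp'$) as the quotient of $k[U_J]_{J\in\mathcal{J}_{\mathrm{conn}}(P)}$ via $U_J\mapsto\prod_{p\in J}x_p$ is a complete intersection presentation; equivalently, every connected order ideal of $P$ is either principal or nearly principal, where a non-principal connected order ideal $J$ is nearly principal if exactly one pair $\{J_1,J_2\}\in\Pi(P)$ has $J_1\cup J_2=J$. *)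

theory Defs
  imports Main
begin

definition poset_on :: "'a set \<Rightarrow> ('a \<Rightarrow> 'a \<Rightarrow> bool) \<Rightarrow> bool" where
  "poset_on P le \<longleftrightarrow>
     (\<forall>x\<in>P. le x x) \<and>
     (\<forall>x\<in>P. \<forall>y\<in>P. le x y \<and> le y x \<longrightarrow> x = y) \<and>
     (\<forall>x\<in>P. \<forall>y\<in>P. \<forall>z\<in>P. le x y \<and> le y z \<longrightarrow> le x z)"

definition covers :: "'a set \<Rightarrow> ('a \<Rightarrow> 'a \<Rightarrow> bool) \<Rightarrow> 'a \<Rightarrow> 'a \<Rightarrow> bool" where
  "covers P le x y \<longleftrightarrow> x \<in> P \<and> y \<in> P \<and> le x y \<and> x \<noteq> y \<and>
     \<not> (\<exists>z\<in>P. le x z \<and> le z y \<and> z \<noteq> x \<and> z \<noteq> y)"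

definition order_ideal :: "'a set \<Rightarrow> ('a \<Rightarrow> 'a \<Rightarrow> bool) \<Rightarrow> 'a set \<Rightarrow> bool" where
  "order_ideal P le J \<longleftrightarrow> J \<subseteq> P \<and> (\<forall>x\<in>J. \<forall>y\<in>P. le y x \<longrightarrow> y \<in> J)"

definition hasse_connected :: "'a set \<Rightarrow> ('a \<Rightarrow> 'a \<Rightarrow> bool) \<Rightarrow> 'a set \<Rightarrow> bool" where
  "hasse_connected P le J \<longleftrightarrow>
     (\<forall>x\<in>J. \<forall>y\<in>J.
        (\<lambda>u v. u \<in> J \<and> v \<in> J \<and> (covers P le u v \<or> covers P le v u))\<^sup>*\<^sup>* x y)"

definition conn_ideals :: "'a set \<Rightarrow> ('a \<Rightarrow> 'a \<Rightarrow> bool) \<Rightarrow> 'a set set" where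
  "conn_ideals P le = {J. J \<noteq> {} \<and> order_ideal P le J \<and> hasse_connected P le J}"

definition nontriv_pairs :: "'a set \<Rightarrow> ('a \<Rightarrow> 'a \<Rightarrow> bool) \<Rightarrow> 'a set set set" where
  "nontriv_pairs P le = {{J1, J2} | J1 J2. J1 \<in> conn_ideals P le \<and> J2 \<in> conn_ideals P le \<and>
      J1 \<inter> J2 \<noteq> {} \<and> \<not> J1 \<subseteq> J2 \<and> \<not> J2 \<subseteq> J1}"

definition ci_poset :: "'a set \<Rightarrow> ('a \<Rightarrow> 'a \<Rightarrow> bool) \<Rightarrow> bool" where
  "ci_poset P le \<longleftrightarrow>
     int (card (conn_ideals P le)) - int (card (nontriv_pairs P le)) = int (card P)"

end

theory Submission imports Defs begin

text \<open>Principal ideals are connected, and the union of a nontrivially intersecting pair is a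
connected non-principal ideal; conversely every connected non-principal ideal is such a union.
Hence \<open>|J_conn(P)| = |P| + |non-principal|\<close>, so \<open>P\<close> is a c.i.-poset iff \<open>{J1, J2} \<mapsto> J1 \<union> J2\<close>
is injective on \<open>\<Pi>(P)\<close>. For an order embedding \<open>i : Q \<rightarrow> P\<close>, sending an ideal \<open>J\<close> of \<open>Q\<close> to
the down-closure of \<open>i ` J\<close> in \<open>P\<close> is injective and preserves connected ideals, nontrivial
intersections and unions, so injectivity on \<open>\<Pi>(P)\<close> is inherited by \<open>\<Pi>(Q)\<close>.\<close>

lemma poset_on_refl: "poset_on P le \<Longrightarrow> x \<in> P \<Longrightarrow> le x x"
  unfolding poset_on_def by blast

lemma poset_on_antisym: "poset_on P le \<Longrightarrow> x \<in> P \<Longrightarrow> y \<in> P \<Longrightarrow> le x y \<Longrightarrow> le y x \<Longrightarrow> x = y"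
  unfolding poset_on_def by blast

lemma poset_on_trans:
  "poset_on P le \<Longrightarrow> x \<in> P \<Longrightarrow> y \<in> P \<Longrightarrow> z \<in> P \<Longrightarrow> le x y \<Longrightarrow> le y z \<Longrightarrow> le x z"
  unfolding poset_on_def by blast

lemma poset_on_finite_has_minimal:
  assumes "finite S" "S \<noteq> {}" "S \<subseteq> P" "poset_on P le"
  shows "\<exists>z\<in>S. \<forall>w\<in>S. le w z \<longrightarrow> w = z"
  using assms(1-3)
proof (induction S rule: finite_ne_induct)
  case (singleton x)
  then show ?case by simp
next
  case (insert x F)
  then obtain z where z: "z \<in> F" "\<forall>w\<in>F. le w z \<longrightarrow> w = z" by auto
  show ?case
  proof (cases "le x z \<and> x \<noteq> z")
    case True
    have "w = x" if "w \<in> insert x F" "le w x" for w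
    proof (rule ccontr)
      assume "w \<noteq> x"
      with that have "w \<in> F" by auto
      with z(1) insert.prems have "w \<in> P" "x \<in> P" "z \<in> P" by auto
      with that True have "le w z" using poset_on_trans[OF assms(4)] by blast
      with z \<open>w \<in> F\<close> have "w = z" by auto
      with that True \<open>x \<in> P\<close> \<open>z \<in> P\<close> show False using poset_on_antisym[OF assms(4)] by blast
    qed
    then show ?thesis by auto
  next
    case False
    then show ?thesis using z by auto
  qed
qed

definition hasse_edge :: "'a set \<Rightarrow> ('a \<Rightarrow> 'a \<Rightarrow> bool) \<Rightarrow> 'a set \<Rightarrow> 'a \<Rightarrow> 'a \<Rightarrow> bool" where
  "hasse_edge P le J u v \<longleftrightarrow> u \<in> J \<and> v \<in> J \<and> (covers P le u v \<or> covers P le v u)"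

lemma hasse_connected_iff:
  "hasse_connected P le J \<longleftrightarrow> (\<forall>x\<in>J. \<forall>y\<in>J. (hasse_edge P le J)\<^sup>*\<^sup>* x y)"
  unfolding hasse_connected_def hasse_edge_def[abs_def] by simp

lemma hasse_path_sym: "(hasse_edge P le J)\<^sup>*\<^sup>* x y \<Longrightarrow> (hasse_edge P le J)\<^sup>*\<^sup>* y x"
proof (induction rule: rtranclp_induct)
  case (step y z)
  then have "hasse_edge P le J z y" by (auto simp: hasse_edge_def)
  then show ?case using step(3) by (rule converse_rtranclp_into_rtranclp)
qed simp

lemma hasse_path_mono: "A \<subseteq> B \<Longrightarrow> (hasse_edge P le A)\<^sup>*\<^sup>* x y \<Longrightarrow> (hasse_edge P le B)\<^sup>*\<^sup>* x y"
  by (erule rtranclp_mono[THEN predicate2D, rotated]) (auto simp: hasse_edge_def)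

lemma rtranclp_leaves_set:
  "r\<^sup>*\<^sup>* x y \<Longrightarrow> x \<in> A \<Longrightarrow> y \<notin> A \<Longrightarrow> \<exists>u v. r u v \<and> u \<in> A \<and> v \<notin> A"
  by (induction rule: rtranclp_induct) auto

subsection \<open>Principal and non-principal connected ideals\<close>

definition principal_ideal :: "'a set \<Rightarrow> ('a \<Rightarrow> 'a \<Rightarrow> bool) \<Rightarrow> 'a \<Rightarrow> 'a set" where
  "principal_ideal P le p = {y \<in> P. le y p}"

definition nonprincipal_ideals :: "'a set \<Rightarrow> ('a \<Rightarrow> 'a \<Rightarrow> bool) \<Rightarrow> 'a set set" where
  "nonprincipal_ideals P le = conn_ideals P le - principal_ideal P le ` P"

lemma exists_cover_below:
  assumes fin: "finite P" and po: "poset_on P le"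
    and "y \<in> P" "p \<in> P" "le y p" "y \<noteq> p"
  obtains z where "covers P le y z" "le z p"
proof -
  define S where "S = {z \<in> P. le y z \<and> z \<noteq> y \<and> le z p}"
  have "finite S" using fin by (simp add: S_def)
  moreover have "p \<in> S" using assms(4-6) poset_on_refl[OF po] by (auto simp: S_def)
  ultimately obtain z where "z \<in> S" and zmin: "\<forall>w\<in>S. le w z \<longrightarrow> w = z"
    using poset_on_finite_has_minimal[OF _ _ _ po, of S] S_def by blast
  then have z: "z \<in> P" "le y z" "z \<noteq> y" "le z p" by (auto simp: S_def)
  have "\<not> (\<exists>w\<in>P. le y w \<and> le w z \<and> w \<noteq> y \<and> w \<noteq> z)"
  proof
    assume "\<exists>w\<in>P. le y w \<and> le w z \<and> w \<noteq> y \<and> w \<noteq> z"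
    then obtain w where w: "w \<in> P" "le y w" "le w z" "w \<noteq> y" "w \<noteq> z" by blast
    then have "w \<in> S" using poset_on_trans[OF po w(1) z(1) assms(4)] z by (auto simp: S_def)
    then show False using zmin w by auto
  qed
  with z assms(3) have "covers P le y z" unfolding covers_def by blast
  then show thesis using z(4) by (rule that)
qed

lemma hasse_path_principal_ideal:
  assumes fin: "finite P" and po: "poset_on P le" and p: "p \<in> P"
  shows "y \<in> P \<Longrightarrow> le y p \<Longrightarrow> (hasse_edge P le (principal_ideal P le p))\<^sup>*\<^sup>* y p"
proof (induction "card {w \<in> P. le y w \<and> le w p}" arbitrary: y rule: less_induct)
  case (less y)
  show ?case
  proof (cases "y = p")
    case False
    then obtain z where cov: "covers P le y z" and "le z p"
      using exists_cover_below[OF fin po less(2) p less(3)] by blast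
    then have z: "z \<in> P" "le y z" "z \<noteq> y" unfolding covers_def by blast+
    have "{w \<in> P. le z w \<and> le w p} \<subset> {w \<in> P. le y w \<and> le w p}"
    proof
      show "{w \<in> P. le z w \<and> le w p} \<subseteq> {w \<in> P. le y w \<and> le w p}"
        using poset_on_trans[OF po less(2) z(1)] z(2) by blast
      have "y \<notin> {w \<in> P. le z w \<and> le w p}"
        using poset_on_antisym[OF po z(1) less(2)] z(2,3) by blast
      then show "{w \<in> P. le z w \<and> le w p} \<noteq> {w \<in> P. le y w \<and> le w p}"
        using less(2,3) poset_on_refl[OF po less(2)] by blast
    qed
    then have "card {w \<in> P. le z w \<and> le w p} < card {w \<in> P. le y w \<and> le w p}"
      using fin by (intro psubset_card_mono) auto
    then have "(hasse_edge P le (principal_ideal P le p))\<^sup>*\<^sup>* z p"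
      using less(1) z(1) \<open>le z p\<close> by blast
    moreover have "hasse_edge P le (principal_ideal P le p) y z"
      using cov z less \<open>le z p\<close> by (auto simp: hasse_edge_def principal_ideal_def)
    ultimately show ?thesis by (rule converse_rtranclp_into_rtranclp[rotated])
  qed simp
qed

lemma principal_ideal_in_conn_ideals:
  assumes fin: "finite P" and po: "poset_on P le" and p: "p \<in> P"
  shows "principal_ideal P le p \<in> conn_ideals P le"
proof -
  have "p \<in> principal_ideal P le p" using poset_on_refl[OF po p] p by (simp add: principal_ideal_def)
  moreover have "order_ideal P le (principal_ideal P le p)"
    unfolding order_ideal_def principal_ideal_def using poset_on_trans[OF po _ _ p] by blast
  moreover have "hasse_connected P le (principal_ideal P le p)"
    unfolding hasse_connected_iff
    using hasse_path_principal_ideal[OF fin po p] hasse_path_sym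
    by (metis (no_types, lifting) mem_Collect_eq principal_ideal_def rtranclp_trans)
  ultimately show ?thesis unfolding conn_ideals_def by auto
qed

lemma inj_on_principal_ideal: "poset_on P le \<Longrightarrow> inj_on (principal_ideal P le) P"
  unfolding inj_on_def principal_ideal_def
  using poset_on_refl poset_on_antisym by (smt (verit) mem_Collect_eq)

lemma Un_in_conn_ideals:
  assumes "A \<in> conn_ideals P le" "B \<in> conn_ideals P le" "A \<inter> B \<noteq> {}"
  shows "A \<union> B \<in> conn_ideals P le"
proof -
  obtain c where c: "c \<in> A" "c \<in> B" using assms(3) by auto
  have hA: "\<forall>x\<in>A. \<forall>y\<in>A. (hasse_edge P le A)\<^sup>*\<^sup>* x y"
    and hB: "\<forall>x\<in>B. \<forall>y\<in>B. (hasse_edge P le B)\<^sup>*\<^sup>* x y"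
    using assms unfolding conn_ideals_def hasse_connected_iff by auto
  have "(hasse_edge P le (A \<union> B))\<^sup>*\<^sup>* x c" if "x \<in> A \<union> B" for x
    using that hA hB c hasse_path_mono[of A "A \<union> B"] hasse_path_mono[of B "A \<union> B"] by blast
  then have "hasse_connected P le (A \<union> B)"
    unfolding hasse_connected_iff using hasse_path_sym by (metis rtranclp_trans)
  moreover have "order_ideal P le (A \<union> B)"
    using assms unfolding conn_ideals_def order_ideal_def by blast
  ultimately show ?thesis using c unfolding conn_ideals_def by auto
qed

lemma nontriv_pairsE:
  assumes "S \<in> nontriv_pairs P le"
  obtains J1 J2 where "S = {J1, J2}" "J1 \<in> conn_ideals P le" "J2 \<in> conn_ideals P le"
    "J1 \<inter> J2 \<noteq> {}" "\<not> J1 \<subseteq> J2" "\<not> J2 \<subseteq> J1"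
  using assms unfolding nontriv_pairs_def by blast

lemma nontriv_pairs_subset_conn_ideals: "S \<in> nontriv_pairs P le \<Longrightarrow> S \<subseteq> conn_ideals P le"
  by (erule nontriv_pairsE) simp

lemma Union_nontriv_pair_nonprincipal:
  assumes po: "poset_on P le" and S: "S \<in> nontriv_pairs P le"
  shows "\<Union>S \<in> nonprincipal_ideals P le"
proof -
  obtain J1 J2 where J: "S = {J1, J2}" "J1 \<in> conn_ideals P le" "J2 \<in> conn_ideals P le"
    "J1 \<inter> J2 \<noteq> {}" "\<not> J1 \<subseteq> J2" "\<not> J2 \<subseteq> J1"
    using S by (rule nontriv_pairsE)
  have "J1 \<union> J2 \<noteq> principal_ideal P le p" if p: "p \<in> P" for p
  proof
    assume eq: "J1 \<union> J2 = principal_ideal P le p"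
    have "p \<in> J1 \<union> J2" unfolding eq principal_ideal_def using p poset_on_refl[OF po p] by simp
    moreover have "J1 \<union> J2 \<subseteq> J" if "J \<in> conn_ideals P le" "p \<in> J" for J
      using that unfolding eq principal_ideal_def conn_ideals_def order_ideal_def by blast
    ultimately show False using J by blast
  qed
  then show ?thesis
    using J Un_in_conn_ideals[OF J(2-4)] by (auto simp: nonprincipal_ideals_def)
qed

lemma cover_leaving_subideal:
  assumes J: "hasse_connected P le J" and A: "order_ideal P le A" "A \<subseteq> J" "A \<noteq> J" "A \<noteq> {}"
  obtains u v where "u \<in> A" "v \<in> J" "v \<notin> A" "covers P le u v"
proof -
  obtain x y where xy: "x \<in> A" "y \<in> J" "y \<notin> A" using A by blast
  then have "(hasse_edge P le J)\<^sup>*\<^sup>* x y" using J A(2) unfolding hasse_connected_iff by blast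
  then obtain u v where uv: "hasse_edge P le J u v" "u \<in> A" "v \<notin> A"
    using rtranclp_leaves_set[OF _ xy(1,3)] by blast
  have "\<not> covers P le v u"
  proof
    assume "covers P le v u"
    then have "v \<in> P" "le v u" unfolding covers_def by blast+
    then show False using A(1) uv(2,3) unfolding order_ideal_def by blast
  qed
  then have "v \<in> J" "covers P le u v" using uv(1) unfolding hasse_edge_def by blast+
  then show thesis using that uv(2,3) by blast
qed

lemma finite_conn_ideals: "finite P \<Longrightarrow> finite (conn_ideals P le)"
  by (rule finite_subset[of _ "Pow P"]) (auto simp: conn_ideals_def order_ideal_def)

lemma finite_nontriv_pairs: "finite P \<Longrightarrow> finite (nontriv_pairs P le)"
  by (rule finite_subset[of _ "Pow (conn_ideals P le)"]) (auto simp: nontriv_pairs_def finite_conn_ideals)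

lemma exists_maximal_proper_conn_subideal:
  assumes "finite P" "A0 \<in> conn_ideals P le" "A0 \<subset> J"
  obtains A where "A \<in> conn_ideals P le" "A \<subset> J"
    "\<And>B. B \<in> conn_ideals P le \<Longrightarrow> A \<subseteq> B \<Longrightarrow> B \<subset> J \<Longrightarrow> B = A"
proof -
  have "finite {A \<in> conn_ideals P le. A \<subset> J}"
    using finite_conn_ideals[OF assms(1)] by (rule finite_subset[rotated]) blast
  moreover have "A0 \<in> {A \<in> conn_ideals P le. A \<subset> J}" using assms(2,3) by blast
  ultimately obtain A where A: "A \<in> {A \<in> conn_ideals P le. A \<subset> J}"
    and Amax: "\<forall>B \<in> {A \<in> conn_ideals P le. A \<subset> J}. A \<subseteq> B \<longrightarrow> A = B"
    using finite_has_maximal[of "{A \<in> conn_ideals P le. A \<subset> J}"] by blast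
  show thesis
  proof (rule that)
    show "A \<in> conn_ideals P le" "A \<subset> J" using A by blast+
    show "B = A" if "B \<in> conn_ideals P le" "A \<subseteq> B" "B \<subset> J" for B
      using Amax that by blast
  qed
qed

text \<open>\<open>J\<close> is the union of a maximal connected ideal \<open>A \<subset> J\<close> and the principal ideal of an element
of \<open>J\<close> covering an element of \<open>A\<close>.\<close>

lemma nonprincipal_is_Union_nontriv_pair:
  assumes fin: "finite P" and po: "poset_on P le" and J: "J \<in> nonprincipal_ideals P le"
  shows "\<exists>S\<in>nontriv_pairs P le. \<Union>S = J"
proof -
  have Jc: "J \<in> conn_ideals P le" and Jnp: "J \<notin> principal_ideal P le ` P"
    using J by (auto simp: nonprincipal_ideals_def)
  then have Joi: "order_ideal P le J" and JP: "J \<subseteq> P"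
    unfolding conn_ideals_def order_ideal_def by auto
  have principal_sub: "principal_ideal P le x \<subseteq> J" if "x \<in> J" for x
    using Joi that unfolding order_ideal_def principal_ideal_def by blast
  obtain x0 where "x0 \<in> J" using Jc unfolding conn_ideals_def by auto
  then have "principal_ideal P le x0 \<in> conn_ideals P le" "principal_ideal P le x0 \<subset> J"
    using principal_ideal_in_conn_ideals[OF fin po] principal_sub Jnp JP by blast+
  then obtain A where Ac: "A \<in> conn_ideals P le" and AJ: "A \<subset> J"
    and Amax: "\<And>B. B \<in> conn_ideals P le \<Longrightarrow> A \<subseteq> B \<Longrightarrow> B \<subset> J \<Longrightarrow> B = A"
    using exists_maximal_proper_conn_subideal[OF fin] by metis
  obtain u v where uv: "u \<in> A" "v \<in> J" "v \<notin> A" "covers P le u v"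
    using cover_leaving_subideal[of P le J A] Jc Ac AJ unfolding conn_ideals_def by blast
  define B where "B = principal_ideal P le v"
  have "v \<in> P" using uv JP by blast
  have Bc: "B \<in> conn_ideals P le"
    unfolding B_def using principal_ideal_in_conn_ideals[OF fin po \<open>v \<in> P\<close>] .
  have "u \<in> B" "v \<in> B"
    using uv poset_on_refl[OF po \<open>v \<in> P\<close>] unfolding B_def principal_ideal_def covers_def by auto
  have "A \<union> B \<in> conn_ideals P le" using Un_in_conn_ideals[OF Ac Bc] \<open>u \<in> B\<close> uv by blast
  moreover have "A \<union> B \<subseteq> J" using AJ principal_sub[OF uv(2)] B_def by blast
  ultimately have "A \<union> B = J" using Amax[of "A \<union> B"] \<open>v \<in> B\<close> uv(3) by blast
  moreover have "\<not> A \<subseteq> B" using \<open>A \<union> B = J\<close> Jnp \<open>v \<in> P\<close> B_def by auto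
  moreover have "{A, B} \<in> nontriv_pairs P le"
    using \<open>\<not> A \<subseteq> B\<close> \<open>u \<in> B\<close> \<open>v \<in> B\<close> uv Ac Bc unfolding nontriv_pairs_def by blast
  ultimately show ?thesis by (intro bexI[of _ "{A, B}"]) auto
qed

lemma Union_nontriv_pairs_eq:
  assumes "finite P" "poset_on P le"
  shows "Union ` nontriv_pairs P le = nonprincipal_ideals P le"
  using Union_nontriv_pair_nonprincipal[OF assms(2)] nonprincipal_is_Union_nontriv_pair[OF assms]
  by blast

lemma card_conn_ideals:
  assumes fin: "finite P" and po: "poset_on P le"
  shows "card (conn_ideals P le) = card P + card (nonprincipal_ideals P le)"
proof -
  have sub: "principal_ideal P le ` P \<subseteq> conn_ideals P le"
    using principal_ideal_in_conn_ideals[OF fin po] by auto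
  have "card (principal_ideal P le ` P) = card P"
    using card_image[OF inj_on_principal_ideal[OF po]] .
  moreover have "card (principal_ideal P le ` P) \<le> card (conn_ideals P le)"
    using card_mono[OF finite_conn_ideals[OF fin] sub] .
  ultimately show ?thesis
    unfolding nonprincipal_ideals_def
    using card_Diff_subset[OF finite_subset[OF sub finite_conn_ideals[OF fin]] sub] by linarith
qed

lemma ci_poset_iff_inj_on_Union:
  assumes fin: "finite P" and po: "poset_on P le"
  shows "ci_poset P le \<longleftrightarrow> inj_on Union (nontriv_pairs P le)"
proof -
  have "ci_poset P le \<longleftrightarrow> card (nontriv_pairs P le) = card (Union ` nontriv_pairs P le)"
    unfolding ci_poset_def Union_nontriv_pairs_eq[OF fin po] using card_conn_ideals[OF fin po]
    by linarith
  also have "\<dots> \<longleftrightarrow> inj_on Union (nontriv_pairs P le)"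
    using eq_card_imp_inj_on[OF finite_nontriv_pairs[OF fin]] card_image by metis
  finally show ?thesis .
qed

subsection \<open>Transfer along an order embedding\<close>

locale order_embedding =
  fixes P :: "'a set" and leP :: "'a \<Rightarrow> 'a \<Rightarrow> bool"
    and Q :: "'b set" and leQ :: "'b \<Rightarrow> 'b \<Rightarrow> bool"
    and i :: "'b \<Rightarrow> 'a"
  assumes finite_P: "finite P" and poset_P: "poset_on P leP"
    and i_into: "i ` Q \<subseteq> P"
    and le_iff: "\<forall>q\<in>Q. \<forall>q'\<in>Q. leP (i q) (i q') \<longleftrightarrow> leQ q q'"
begin

definition lower_closure :: "'b set \<Rightarrow> 'a set" where
  "lower_closure J = {y \<in> P. \<exists>q\<in>J. leP y (i q)}"

lemma i_mem: "q \<in> Q \<Longrightarrow> i q \<in> P"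
  using i_into by blast

lemma i_mem_lower_closure: "q \<in> J \<Longrightarrow> J \<subseteq> Q \<Longrightarrow> i q \<in> lower_closure J"
  using i_mem poset_on_refl[OF poset_P] unfolding lower_closure_def by blast

lemma vimage_lower_closure:
  assumes J: "order_ideal Q leQ J"
  shows "{q \<in> Q. i q \<in> lower_closure J} = J"
proof
  have JQ: "J \<subseteq> Q" using J unfolding order_ideal_def by blast
  show "{q \<in> Q. i q \<in> lower_closure J} \<subseteq> J"
  proof
    fix q assume "q \<in> {q \<in> Q. i q \<in> lower_closure J}"
    then obtain q' where "q \<in> Q" "q' \<in> J" "leP (i q) (i q')"
      unfolding lower_closure_def by blast
    moreover from this have "leQ q q'" using le_iff JQ by blast
    ultimately show "q \<in> J" using J unfolding order_ideal_def by blast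
  qed
  show "J \<subseteq> {q \<in> Q. i q \<in> lower_closure J}"
    using JQ i_mem_lower_closure by blast
qed

lemma lower_closure_subset_iff:
  assumes "order_ideal Q leQ A" "order_ideal Q leQ B"
  shows "lower_closure A \<subseteq> lower_closure B \<longleftrightarrow> A \<subseteq> B"
proof
  assume "lower_closure A \<subseteq> lower_closure B"
  then have "{q \<in> Q. i q \<in> lower_closure A} \<subseteq> {q \<in> Q. i q \<in> lower_closure B}" by blast
  then show "A \<subseteq> B" unfolding vimage_lower_closure[OF assms(1)] vimage_lower_closure[OF assms(2)] .
qed (auto simp: lower_closure_def)

lemma inj_on_lower_closure: "inj_on lower_closure (conn_ideals Q leQ)"
proof (rule inj_onI)
  fix A B assume "A \<in> conn_ideals Q leQ" "B \<in> conn_ideals Q leQ" "lower_closure A = lower_closure B"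
  then show "A = B"
    using lower_closure_subset_iff unfolding conn_ideals_def by blast
qed

lemma lower_closure_Union: "lower_closure (\<Union>S) = \<Union>(lower_closure ` S)"
  unfolding lower_closure_def by blast

lemma hasse_path_lower_closure:
  assumes "J \<subseteq> Q" "q \<in> J" "y \<in> P" "leP y (i q)"
  shows "(hasse_edge P leP (lower_closure J))\<^sup>*\<^sup>* y (i q)"
proof -
  have "i q \<in> P" using assms(1,2) i_mem by blast
  have "principal_ideal P leP (i q) \<subseteq> lower_closure J"
    using assms(2) unfolding principal_ideal_def lower_closure_def by blast
  moreover have "(hasse_edge P leP (principal_ideal P leP (i q)))\<^sup>*\<^sup>* y (i q)"
    using hasse_path_principal_ideal[OF finite_P poset_P \<open>i q \<in> P\<close> assms(3,4)] .
  ultimately show ?thesis by (rule hasse_path_mono)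
qed

text \<open>A cover \<open>y \<prec> z\<close> in \<open>Q\<close> need not be a cover in \<open>P\<close>, but \<open>i y \<le> i z\<close> is joined by a Hasse
path inside the principal ideal of \<open>i z\<close>.\<close>

lemma hasse_path_image:
  assumes JQ: "J \<subseteq> Q" and path: "(hasse_edge Q leQ J)\<^sup>*\<^sup>* a b"
  shows "(hasse_edge P leP (lower_closure J))\<^sup>*\<^sup>* (i a) (i b)"
  using path
proof (induction rule: rtranclp_induct)
  case (step y z)
  from step(2) have yz: "y \<in> J" "z \<in> J" and "leQ y z \<or> leQ z y"
    unfolding hasse_edge_def covers_def by blast+
  moreover have "y \<in> Q" "z \<in> Q" using yz JQ by auto
  ultimately have "leP (i y) (i z) \<or> leP (i z) (i y)"
    using le_iff[rule_format, of y z] le_iff[rule_format, of z y] by simp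
  then have "(hasse_edge P leP (lower_closure J))\<^sup>*\<^sup>* (i y) (i z)"
  proof
    assume "leP (i y) (i z)"
    then show ?thesis by (rule hasse_path_lower_closure[OF JQ yz(2) i_mem[OF \<open>y \<in> Q\<close>]])
  next
    assume "leP (i z) (i y)"
    then show ?thesis by (rule hasse_path_sym[OF hasse_path_lower_closure[OF JQ yz(1) i_mem[OF \<open>z \<in> Q\<close>]]])
  qed
  with step(3) show ?case by (rule rtranclp_trans)
qed simp

lemma lower_closure_in_conn_ideals:
  assumes J: "J \<in> conn_ideals Q leQ"
  shows "lower_closure J \<in> conn_ideals P leP"
proof -
  have JQ: "J \<subseteq> Q" and Jc: "\<forall>x\<in>J. \<forall>y\<in>J. (hasse_edge Q leQ J)\<^sup>*\<^sup>* x y"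
    using J unfolding conn_ideals_def order_ideal_def hasse_connected_iff by auto
  have "hasse_connected P leP (lower_closure J)"
    unfolding hasse_connected_iff
  proof (intro ballI)
    fix x y assume "x \<in> lower_closure J" "y \<in> lower_closure J"
    then obtain qx qy where q: "qx \<in> J" "leP x (i qx)" "x \<in> P" "qy \<in> J" "leP y (i qy)" "y \<in> P"
      unfolding lower_closure_def by blast
    have "(hasse_edge P leP (lower_closure J))\<^sup>*\<^sup>* x (i qx)"
      using hasse_path_lower_closure[OF JQ q(1,3,2)] .
    also have "(hasse_edge P leP (lower_closure J))\<^sup>*\<^sup>* (i qx) (i qy)"
      using hasse_path_image[OF JQ] Jc q(1,4) by blast
    also have "(hasse_edge P leP (lower_closure J))\<^sup>*\<^sup>* (i qy) y"
      using hasse_path_sym[OF hasse_path_lower_closure[OF JQ q(4,6,5)]] .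
    finally show "(hasse_edge P leP (lower_closure J))\<^sup>*\<^sup>* x y" .
  qed
  moreover have "order_ideal P leP (lower_closure J)"
    using poset_on_trans[OF poset_P] i_mem JQ unfolding order_ideal_def lower_closure_def by blast
  moreover have "lower_closure J \<noteq> {}"
    using J i_mem_lower_closure[OF _ JQ] unfolding conn_ideals_def by blast
  ultimately show ?thesis unfolding conn_ideals_def by blast
qed

lemma lower_closure_nontriv_pair:
  assumes "S \<in> nontriv_pairs Q leQ"
  shows "lower_closure ` S \<in> nontriv_pairs P leP"
proof -
  obtain J1 J2 where J: "S = {J1, J2}" "J1 \<in> conn_ideals Q leQ" "J2 \<in> conn_ideals Q leQ"
    "J1 \<inter> J2 \<noteq> {}" "\<not> J1 \<subseteq> J2" "\<not> J2 \<subseteq> J1"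
    using assms by (rule nontriv_pairsE)
  have oi: "order_ideal Q leQ J1" "order_ideal Q leQ J2"
    using J(2,3) unfolding conn_ideals_def by blast+
  then have JQ: "J1 \<subseteq> Q" "J2 \<subseteq> Q"
    unfolding order_ideal_def by blast+
  obtain q where "q \<in> J1" "q \<in> J2" using J(4) by blast
  then have "i q \<in> lower_closure J1 \<inter> lower_closure J2"
    using i_mem_lower_closure JQ by blast
  then have "lower_closure J1 \<inter> lower_closure J2 \<noteq> {}" by blast
  moreover have "\<not> lower_closure J1 \<subseteq> lower_closure J2" "\<not> lower_closure J2 \<subseteq> lower_closure J1"
    using J(5,6) lower_closure_subset_iff[OF oi] lower_closure_subset_iff[OF oi(2,1)] by blast+
  moreover have "lower_closure J1 \<in> conn_ideals P leP" "lower_closure J2 \<in> conn_ideals P leP"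
    using lower_closure_in_conn_ideals J(2,3) by blast+
  ultimately have "{lower_closure J1, lower_closure J2} \<in> nontriv_pairs P leP"
    unfolding nontriv_pairs_def by blast
  then show ?thesis using J(1) by simp
qed

lemma inj_on_Union_nontriv_pairs_transfer:
  assumes inj: "inj_on Union (nontriv_pairs P leP)"
  shows "inj_on Union (nontriv_pairs Q leQ)"
proof (rule inj_onI)
  fix S1 S2 assume S: "S1 \<in> nontriv_pairs Q leQ" "S2 \<in> nontriv_pairs Q leQ" "\<Union>S1 = \<Union>S2"
  have "\<Union>(lower_closure ` S1) = \<Union>(lower_closure ` S2)"
    using S(3) lower_closure_Union by metis
  then have "lower_closure ` S1 = lower_closure ` S2"
    by (rule inj_onD[OF inj _ lower_closure_nontriv_pair[OF S(1)] lower_closure_nontriv_pair[OF S(2)]])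
  then show "S1 = S2"
    using inj_on_image_eq_iff[OF inj_on_lower_closure nontriv_pairs_subset_conn_ideals[OF S(1)]
        nontriv_pairs_subset_conn_ideals[OF S(2)]] by blast
qed

end

theorem corollary10p3:
  fixes P :: "'a set" and leP :: "'a \<Rightarrow> 'a \<Rightarrow> bool"
    and Q :: "'b set" and leQ :: "'b \<Rightarrow> 'b \<Rightarrow> bool"
    and i :: "'b \<Rightarrow> 'a"
  assumes "finite P" and "poset_on P leP"
    and "finite Q" and "poset_on Q leQ"
    and "ci_poset P leP"
    and "inj_on i Q" and "i ` Q \<subseteq> P"
    and "\<forall>q\<in>Q. \<forall>q'\<in>Q. leP (i q) (i q') \<longleftrightarrow> leQ q q'"
  shows "ci_poset Q leQ"
proof -
  interpret order_embedding P leP Q leQ i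
    using assms by unfold_locales
  have "inj_on Union (nontriv_pairs P leP)"
    using ci_poset_iff_inj_on_Union[OF assms(1,2)] assms(5) by blast
  then have "inj_on Union (nontriv_pairs Q leQ)"
    by (rule inj_on_Union_nontriv_pairs_transfer)
  then show ?thesis
    using ci_poset_iff_inj_on_Union[OF assms(3,4)] by blast
qed

end
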